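(* Let $K$ be a field and let $C=(c_{i,j})_{1\le i,j\le n}$ be a frieze matrix over $K$. Then for all $1\le i\le n-1$, $$c_{i,n}c_{1,i+1}-c_{i+1,n}c_{1,i} = c_{i,i+1}c_{1,n}.$$
   Context: A frieze matrix is a symmetric $n\times n$ matrix $C=(c_{i,j})$ over $K$ such that $c_{i,j}=0$ if and only if $i=j$, and satisfying the generalized diamond rule $c_{i,j}c_{i+1,j+1}-c_{i+1,j}c_{i,j+1}=c_{i,i+1}c_{j,j+1}$ for all indices with $n-1\ge j\ge i+1\ge 2$. *)

theory Defs
  imports Main
begin

text \<open>An n x n matrix over a field, indexed by 1..n, represented as a function
  nat => nat => 'a (only entries with indices in 1..n are relevant).\<close>

definition frieze_matrix :: "nat \<Rightarrow> (nat \<Rightarrow> nat \<Rightarrow> 'a::field) \<Rightarrow> bool" where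
  "frieze_matrix n c \<longleftrightarrow>
     (\<forall>i\<in>{1..n}. \<forall>j\<in>{1..n}. c i j = c j i) \<and>
     (\<forall>i\<in>{1..n}. \<forall>j\<in>{1..n}. c i j = 0 \<longleftrightarrow> i = j) \<and>
     (\<forall>i j. 1 \<le> i \<and> i + 1 \<le> j \<and> j \<le> n - 1 \<longrightarrow>
        c i j * c (i+1) (j+1) - c (i+1) j * c i (j+1) = c i (i+1) * c j (j+1))"

end

theory Submission
  imports Defs
begin

text \<open>With \<open>c\<^sub>1\<^sub>2 \<noteq> 0\<close>, the diamond rule forces \<open>c\<^sub>1\<^sub>2 c\<^sub>a\<^sub>b\<close>, for \<open>2 \<le> a \<le> b\<close>,
  to be the \<open>2 \<times> 2\<close> minor in columns \<open>a, b\<close> of the first two rows of \<open>C\<close>: this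
  holds directly on the diagonal, on the superdiagonal and in row 2, and propagates
  by strong induction because the minors satisfy the same three-term relation as
  the diamond rule.  The entries \<open>c\<^sub>1\<^sub>b\<close> are, up to sign, minors as well, so the
  claimed identity becomes the three-term Pluecker relation.\<close>

definition minor2 :: "('b \<Rightarrow> 'a::comm_ring) \<Rightarrow> ('b \<Rightarrow> 'a) \<Rightarrow> 'b \<Rightarrow> 'b \<Rightarrow> 'a" where
  "minor2 u v a b = u a * v b - v a * u b"

lemma minor2_self [simp]: "minor2 u v a a = 0"
  by (simp add: minor2_def mult.commute)

lemma minor2_pluecker:
  "minor2 u v w y * minor2 u v x z = minor2 u v w x * minor2 u v y z + minor2 u v w z * minor2 u v x y"
  by (simp add: minor2_def algebra_simps)

lemma minor2_diamond_step:
  fixes e :: "'b \<Rightarrow> 'b \<Rightarrow> 'a::field"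
  assumes "p \<noteq> 0" and "e w y \<noteq> 0"
    and wy: "p * e w y = minor2 u v w y" and xy: "p * e x y = minor2 u v x y"
    and wz: "p * e w z = minor2 u v w z" and wx: "p * e w x = minor2 u v w x"
    and yz: "p * e y z = minor2 u v y z"
    and diamond: "e w y * e x z - e x y * e w z = e w x * e y z"
  shows "p * e x z = minor2 u v x z"
proof -
  have "(p * e w y) * (p * e x z) = (p * e w x) * (p * e y z) + (p * e w z) * (p * e x y)"
    using diamond by (simp add: algebra_simps eq_diff_eq)
  also have "\<dots> = (p * e w y) * minor2 u v x z"
    unfolding wx yz wz xy wy by (rule minor2_pluecker[symmetric])
  finally show ?thesis
    using assms(1,2) by simp
qed

lemma frieze_matrix_sym:
  "frieze_matrix n c \<Longrightarrow> a \<in> {1..n} \<Longrightarrow> b \<in> {1..n} \<Longrightarrow> c a b = c b a"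
  unfolding frieze_matrix_def by blast

lemma frieze_matrix_eq_0_iff:
  "frieze_matrix n c \<Longrightarrow> a \<in> {1..n} \<Longrightarrow> b \<in> {1..n} \<Longrightarrow> c a b = 0 \<longleftrightarrow> a = b"
  unfolding frieze_matrix_def by blast

lemma frieze_matrix_diamond:
  "frieze_matrix n c \<Longrightarrow> 1 \<le> a \<Longrightarrow> a + 1 \<le> b \<Longrightarrow> b \<le> n - 1 \<Longrightarrow>
    c a b * c (a+1) (b+1) - c (a+1) b * c a (b+1) = c a (a+1) * c b (b+1)"
  unfolding frieze_matrix_def by blast

lemma frieze_matrix_minor2_first_row:
  assumes "frieze_matrix n c" and "2 \<le> n"
  shows "c 1 2 * c 1 b = - minor2 (c 1) (c 2) 1 b"
  using assms frieze_matrix_sym[of n c 2 1] frieze_matrix_eq_0_iff[of n c 1 1]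
  by (simp add: minor2_def)

lemma frieze_matrix_minor2_superdiagonal:
  assumes "frieze_matrix n c" and "2 \<le> a" and "a + 1 \<le> n"
  shows "c 1 2 * c a (a+1) = minor2 (c 1) (c 2) a (a+1)"
  using frieze_matrix_diamond[OF assms(1), of 1 a] assms
  by (simp add: minor2_def numeral_2_eq_2)

lemma frieze_matrix_minor2:
  fixes c :: "nat \<Rightarrow> nat \<Rightarrow> 'a::field"
  assumes fm: "frieze_matrix n c"
  shows "2 \<le> a \<Longrightarrow> a \<le> b \<Longrightarrow> b \<le> n \<Longrightarrow> c 1 2 * c a b = minor2 (c 1) (c 2) a b"
proof (induction "a + b" arbitrary: a b rule: less_induct)
  case less
  consider "a = 2" | "a = b" | "a + 1 = b" | "3 \<le> a" "a + 2 \<le> b"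
    using less.prems by linarith
  then show ?case
  proof cases
    case 1
    then show ?thesis
      using less.prems frieze_matrix_eq_0_iff[OF fm, of 2 2] by (simp add: minor2_def)
  next
    case 2
    then show ?thesis
      using less.prems frieze_matrix_eq_0_iff[OF fm, of a a] by simp
  next
    case 3
    then show ?thesis
      using less.prems frieze_matrix_minor2_superdiagonal[OF fm, of a] by simp
  next
    case 4
    define a' b' where "a' = a - 1" and "b' = b - 1"
    have a: "a = a' + 1" and b: "b = b' + 1"
      using 4 unfolding a'_def b'_def by simp_all
    show ?thesis
    proof (rule minor2_diamond_step[where w = a' and y = b'])
      show "c 1 2 \<noteq> 0" "c a' b' \<noteq> 0"
        using 4 less.prems frieze_matrix_eq_0_iff[OF fm] a b by auto
      show "c a' b' * c a b - c a b' * c a' b = c a' a * c b' b"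
        using frieze_matrix_diamond[OF fm, of a' b'] 4 less.prems a b by simp
      show "c 1 2 * c a' b' = minor2 (c 1) (c 2) a' b'"
        and "c 1 2 * c a b' = minor2 (c 1) (c 2) a b'"
        and "c 1 2 * c a' b = minor2 (c 1) (c 2) a' b"
        and "c 1 2 * c a' a = minor2 (c 1) (c 2) a' a"
        using less.hyps 4 less.prems a b by auto
      show "c 1 2 * c b' b = minor2 (c 1) (c 2) b' b"
        using frieze_matrix_minor2_superdiagonal[OF fm, of b'] 4 less.prems b by simp
    qed
  qed
qed

theorem proposition4p5:
  fixes c :: "nat \<Rightarrow> nat \<Rightarrow> 'a::field" and n i :: nat
  assumes "frieze_matrix n c"
    and "1 \<le> i" and "i \<le> n - 1"
  shows "c i n * c 1 (i+1) - c (i+1) n * c 1 i = c i (i+1) * c 1 n"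
proof (cases "i = 1")
  case True
  then show ?thesis
    using assms frieze_matrix_eq_0_iff[OF assms(1), of 1 1] by (simp add: mult.commute)
next
  case False
  let ?m = "minor2 (c 1) (c 2)"
  let ?p = "c 1 2"
  have "?p \<noteq> 0"
    using assms frieze_matrix_eq_0_iff[OF assms(1), of 1 2] by simp
  have inner: "?p * c i n = ?m i n" "?p * c (i+1) n = ?m (i+1) n" "?p * c i (i+1) = ?m i (i+1)"
    using assms False frieze_matrix_minor2[OF assms(1)] by auto
  have first_row: "?p * c 1 i = - ?m 1 i" "?p * c 1 (i+1) = - ?m 1 (i+1)" "?p * c 1 n = - ?m 1 n"
    using assms frieze_matrix_minor2_first_row[OF assms(1)] by auto
  have "(?p * ?p) * (c i n * c 1 (i+1) - c (i+1) n * c 1 i)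
      = (?p * c i n) * (?p * c 1 (i+1)) - (?p * c (i+1) n) * (?p * c 1 i)"
    by (simp add: algebra_simps)
  also have "\<dots> = - (?m 1 (i+1) * ?m i n - ?m 1 i * ?m (i+1) n)"
    unfolding inner first_row by (simp add: algebra_simps)
  also have "\<dots> = - (?m 1 n * ?m i (i+1))"
    using minor2_pluecker[of "c 1" "c 2" 1 "i+1" i n] by simp
  also have "\<dots> = (?p * c i (i+1)) * (?p * c 1 n)"
    unfolding inner first_row by simp
  finally show ?thesis
    using \<open>?p \<noteq> 0\<close> by simp
qed

end
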